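(* Every vulnerable directed $st$-graph is edge-weak.
   Context: A directed $st$-graph $G=(V,E,s,t)$ is a finite directed graph with no self-loops and no parallel edges, with distinct source $s$ (no incoming edges) and sink $t$ (no outgoing edges), such that every vertex lies on some directed walk from $s$ to $t$. Vulnerability: $P(G)$ is the set of directed $s$–$t$ walks; a flow is a finitely supported $\varphi:P(G)\to\mathbb{R}_{\ge0}$ inducing $\varphi(e)=\sum_p(\text{occurrences of }e\text{ in }p)\varphi(p)$; a latency function assigns each edge a continuous non-decreasing $l_e:\mathbb{R}_{\ge0}\to\mathbb{R}_{\ge0}$ with $l_p(\varphi)=\sum_{e\in p}l_e(\varphi(e))$; $\varphi$ of total value $r$ is a Wardrop flow for $(G,r,l)$ if $l_p(\varphi)\le l_q(\varphi)$ whenever $\varphi(p)>0$; $L(G,r,l)$ is the common latency of used paths ($0$ if $r=0$); $G$ is vulnerable if $L(G,r,l)>L(H,r,l|_H)$ for some $r$, $l$ and subgraph $H$ with the same source and sink. Edge-weakness: given capacities $c:E\to\mathbb{R}_{\ge0}$, a flow is $f:E\to\mathbb{R}_{\ge0}$ with $f(e)\le c_e$ and conservation at vertices other than $s,t$, of value $\sum_{e\in out(s)}f(e)$; $f$ is saturating if every $s$–$t$ walk contains an edge with $f(e)=c_e$; $G$ is edge-weak if for some capacities there is a saturating flow of value strictly less than the maximum flow value. *)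

theory Defs
  imports "HOL-Analysis.Analysis"
begin

text \<open>A graph is given by a vertex set V and an edge relation E (a set of ordered pairs,
so there are no parallel edges).\<close>

definition st_graph :: "'v set \<Rightarrow> ('v \<times> 'v) set \<Rightarrow> 'v \<Rightarrow> 'v \<Rightarrow> bool" where
  "st_graph V E s t \<longleftrightarrow>
     finite V \<and> E \<subseteq> V \<times> V \<and> (\<forall>v. (v, v) \<notin> E) \<and>
     s \<in> V \<and> t \<in> V \<and> s \<noteq> t \<and>
     (\<forall>(u, v) \<in> E. v \<noteq> s) \<and> (\<forall>(u, v) \<in> E. u \<noteq> t) \<and>
     (\<forall>x \<in> V. \<exists>p. p \<noteq> [] \<and> hd p = s \<and> last p = t \<and> set (zip p (tl p)) \<subseteq> E \<and> x \<in> set p)"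

definition walk_edges :: "'v list \<Rightarrow> ('v \<times> 'v) list" where
  "walk_edges p = zip p (tl p)"

definition st_walks :: "('v \<times> 'v) set \<Rightarrow> 'v \<Rightarrow> 'v \<Rightarrow> 'v list set" where
  "st_walks E s t = {p. p \<noteq> [] \<and> hd p = s \<and> last p = t \<and> set (walk_edges p) \<subseteq> E}"

definition latency_fun :: "('v \<times> 'v) set \<Rightarrow> ('v \<times> 'v \<Rightarrow> real \<Rightarrow> real) \<Rightarrow> bool" where
  "latency_fun E l \<longleftrightarrow> (\<forall>e \<in> E. continuous_on {0..} (l e) \<and> mono_on {0..} (l e) \<and>
                                  (\<forall>x \<ge> 0. l e x \<ge> 0))"

definition path_flow :: "('v \<times> 'v) set \<Rightarrow> 'v \<Rightarrow> 'v \<Rightarrow> ('v list \<Rightarrow> real) \<Rightarrow> bool" where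
  "path_flow E s t \<phi> \<longleftrightarrow> finite {p. \<phi> p \<noteq> 0} \<and> (\<forall>p. \<phi> p \<ge> 0) \<and>
                         {p. \<phi> p \<noteq> 0} \<subseteq> st_walks E s t"

definition flow_value :: "('v list \<Rightarrow> real) \<Rightarrow> real" where
  "flow_value \<phi> = (\<Sum>p \<in> {p. \<phi> p \<noteq> 0}. \<phi> p)"

definition edge_load :: "('v list \<Rightarrow> real) \<Rightarrow> 'v \<times> 'v \<Rightarrow> real" where
  "edge_load \<phi> e = (\<Sum>p \<in> {p. \<phi> p \<noteq> 0}. real (count_list (walk_edges p) e) * \<phi> p)"

definition path_latency :: "('v \<times> 'v \<Rightarrow> real \<Rightarrow> real) \<Rightarrow> ('v list \<Rightarrow> real) \<Rightarrow> 'v list \<Rightarrow> real" where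
  "path_latency l \<phi> p = sum_list (map (\<lambda>e. l e (edge_load \<phi> e)) (walk_edges p))"

definition wardrop_flow ::
  "('v \<times> 'v) set \<Rightarrow> 'v \<Rightarrow> 'v \<Rightarrow> real \<Rightarrow> ('v \<times> 'v \<Rightarrow> real \<Rightarrow> real) \<Rightarrow> ('v list \<Rightarrow> real) \<Rightarrow> bool" where
  "wardrop_flow E s t r l \<phi> \<longleftrightarrow> path_flow E s t \<phi> \<and> flow_value \<phi> = r \<and>
     (\<forall>p \<in> st_walks E s t. \<forall>q \<in> st_walks E s t. \<phi> p > 0 \<longrightarrow> path_latency l \<phi> p \<le> path_latency l \<phi> q)"

text \<open>The common latency of the used paths of a Wardrop flow (0 for the zero flow).\<close>
definition wardrop_latency :: "('v \<times> 'v \<Rightarrow> real \<Rightarrow> real) \<Rightarrow> ('v list \<Rightarrow> real) \<Rightarrow> real" where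
  "wardrop_latency l \<phi> = (if flow_value \<phi> = 0 then 0 else path_latency l \<phi> (SOME p. \<phi> p > 0))"

text \<open>L(.,r,l) is the common latency of any Wardrop flow
(well defined since all Wardrop flows have the same latency).\<close>
definition vulnerable :: "'v set \<Rightarrow> ('v \<times> 'v) set \<Rightarrow> 'v \<Rightarrow> 'v \<Rightarrow> bool" where
  "vulnerable V E s t \<longleftrightarrow>
     (\<exists>r l H \<phi> \<psi>. r \<ge> 0 \<and> latency_fun E l \<and> H \<subseteq> E \<and>
        wardrop_flow E s t r l \<phi> \<and> wardrop_flow H s t r l \<psi> \<and>
        wardrop_latency l \<phi> > wardrop_latency l \<psi>)"

definition edge_flow ::
  "'v set \<Rightarrow> ('v \<times> 'v) set \<Rightarrow> 'v \<Rightarrow> 'v \<Rightarrow> ('v \<times> 'v \<Rightarrow> real) \<Rightarrow> ('v \<times> 'v \<Rightarrow> real) \<Rightarrow> bool" where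
  "edge_flow V E s t c f \<longleftrightarrow>
     (\<forall>e \<in> E. 0 \<le> f e \<and> f e \<le> c e) \<and>
     (\<forall>v \<in> V - {s, t}. (\<Sum>e \<in> {e \<in> E. snd e = v}. f e) = (\<Sum>e \<in> {e \<in> E. fst e = v}. f e))"

definition edge_flow_value :: "('v \<times> 'v) set \<Rightarrow> 'v \<Rightarrow> ('v \<times> 'v \<Rightarrow> real) \<Rightarrow> real" where
  "edge_flow_value E s f = (\<Sum>e \<in> {e \<in> E. fst e = s}. f e)"

definition saturating ::
  "('v \<times> 'v) set \<Rightarrow> 'v \<Rightarrow> 'v \<Rightarrow> ('v \<times> 'v \<Rightarrow> real) \<Rightarrow> ('v \<times> 'v \<Rightarrow> real) \<Rightarrow> bool" where
  "saturating E s t c f \<longleftrightarrow> (\<forall>p \<in> st_walks E s t. \<exists>e \<in> set (walk_edges p). f e = c e)"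

text \<open>Value strictly less than the maximum flow value, i.e. some flow has larger value.\<close>
definition edge_weak :: "'v set \<Rightarrow> ('v \<times> 'v) set \<Rightarrow> 'v \<Rightarrow> 'v \<Rightarrow> bool" where
  "edge_weak V E s t \<longleftrightarrow>
     (\<exists>c f g. (\<forall>e \<in> E. c e \<ge> 0) \<and> edge_flow V E s t c f \<and> saturating E s t c f \<and>
              edge_flow V E s t c g \<and> edge_flow_value E s f < edge_flow_value E s g)"

end

theory Submission
  imports Defs
begin

text \<open>
  Let \<phi> be a Wardrop flow of rate r in G and \<psi> one in a subgraph H with L(H) < L(G).
  Give every edge the capacity max(\<phi>(e), (1+\<epsilon>)\<psi>(e)).  Then (1+\<epsilon>)\<psi> is a feasible flow
  of value (1+\<epsilon>)r, while \<phi> has value r and is saturating for \<epsilon> small enough: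
  an unsaturated walk would only use edges with 0 < \<psi>(e) and \<phi>(e) \<le> \<psi>(e).  Every walk built
  from edges used by \<psi> is no longer under \<psi> than a shortest walk, so its latency is
  at most L(H) under \<psi>, hence by monotonicity at most L(H) under \<phi>, contradicting that
  every walk has latency at least L(G) under \<phi>.
\<close>

lemma walk_edges_Nil [simp]: "walk_edges [] = []"
  and walk_edges_single [simp]: "walk_edges [x] = []"
  and walk_edges_Cons_Cons [simp]: "walk_edges (x # y # ys) = (x, y) # walk_edges (y # ys)"
  by (simp_all add: walk_edges_def)

lemma walk_edges_append:
  "xs \<noteq> [] \<Longrightarrow> walk_edges (xs @ ys) = walk_edges xs @ walk_edges (last xs # ys)"
proof (induction xs)
  case (Cons x xs)
  then show ?case by (cases xs) auto
qed simp

lemma walk_edges_append_subset: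
  assumes "xs \<noteq> []"
  shows "set (walk_edges xs) \<subseteq> set (walk_edges (xs @ ys))"
    and "set (walk_edges (last xs # ys)) \<subseteq> set (walk_edges (xs @ ys))"
  using walk_edges_append[OF assms, of ys] by auto

lemma in_walk_edges_split:
  "(u, v) \<in> set (walk_edges p) \<Longrightarrow> \<exists>xs ys. p = xs @ u # v # ys"
proof (induction p rule: induct_list012)
  case (3 x y zs)
  show ?case
  proof (cases "(u, v) = (x, y)")
    case True
    then show ?thesis by (intro exI[of _ "[]"] exI[of _ zs]) auto
  next
    case False
    with "3.prems" obtain as bs where "y # zs = as @ u # v # bs"
      using "3.IH"(2) by auto
    then show ?thesis by (intro exI[of _ "x # as"] exI[of _ bs]) auto
  qed
qed auto

lemma map_fst_walk_edges: "map fst (walk_edges p) = butlast p"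
  by (simp add: walk_edges_def map_fst_zip_take butlast_conv_take)

lemma map_snd_walk_edges: "map snd (walk_edges p) = tl p"
  by (simp add: walk_edges_def map_snd_zip_take)

lemma count_list_map: "count_list (map f xs) y = length (filter (\<lambda>x. f x = y) xs)"
  by (induction xs) auto

lemma count_list_filter: "P x \<Longrightarrow> count_list (filter P xs) x = count_list xs x"
  by (induction xs) auto

lemma sum_count_list_filter:
  assumes "finite A" "set xs \<subseteq> A"
  shows "(\<Sum>x\<in>{x\<in>A. P x}. count_list xs x) = length (filter P xs)"
proof -
  have "(\<Sum>x\<in>{x\<in>A. P x}. count_list xs x) = (\<Sum>x\<in>{x\<in>A. P x}. count_list (filter P xs) x)"
    by (simp add: count_list_filter)
  also have "\<dots> = length (filter P xs)"
    using assms by (intro sum_count_set) auto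
  finally show ?thesis .
qed

lemma edge_load_nonneg: "path_flow E s t \<phi> \<Longrightarrow> 0 \<le> edge_load \<phi> e"
  unfolding edge_load_def path_flow_def by (intro sum_nonneg) auto

lemma edge_load_pos_used_path:
  assumes "path_flow E s t \<phi>" "0 < edge_load \<phi> e"
  obtains p where "0 < \<phi> p" "e \<in> set (walk_edges p)"
proof -
  have "edge_load \<phi> e = 0" if "\<forall>p. 0 < \<phi> p \<longrightarrow> e \<notin> set (walk_edges p)"
    unfolding edge_load_def
  proof (rule sum.neutral, rule ballI)
    fix p assume "p \<in> {p. \<phi> p \<noteq> 0}"
    with assms(1) that have "e \<notin> set (walk_edges p)"
      unfolding path_flow_def by (simp add: order_neq_le_trans)
    then show "real (count_list (walk_edges p) e) * \<phi> p = 0"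
      by simp
  qed
  with assms(2) that show ?thesis
    by force
qed

lemma sum_edge_load:
  assumes "finite E" "path_flow E' s t \<phi>" "E' \<subseteq> E"
  shows "(\<Sum>e\<in>{e\<in>E. P e}. edge_load \<phi> e) =
         (\<Sum>p | \<phi> p \<noteq> 0. \<phi> p * length (filter P (walk_edges p)))"
proof -
  have "(\<Sum>e\<in>{e\<in>E. P e}. edge_load \<phi> e) =
        (\<Sum>p | \<phi> p \<noteq> 0. \<phi> p * (\<Sum>e\<in>{e\<in>E. P e}. count_list (walk_edges p) e))"
    unfolding edge_load_def by (subst sum.swap) (simp add: sum_distrib_left mult.commute)
  also have "\<dots> = (\<Sum>p | \<phi> p \<noteq> 0. \<phi> p * length (filter P (walk_edges p)))"
  proof (rule sum.cong[OF refl])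
    fix p assume "p \<in> {p. \<phi> p \<noteq> 0}"
    with assms(2,3) have "set (walk_edges p) \<subseteq> E"
      unfolding path_flow_def st_walks_def by blast
    with assms(1) show "\<phi> p * (\<Sum>e\<in>{e\<in>E. P e}. count_list (walk_edges p) e) =
                        \<phi> p * length (filter P (walk_edges p))"
      by (simp add: sum_count_list_filter)
  qed
  finally show ?thesis .
qed

lemma edge_load_conservation:
  assumes "finite E" "path_flow E' s t \<phi>" "E' \<subseteq> E" "v \<noteq> s" "v \<noteq> t"
  shows "(\<Sum>e\<in>{e\<in>E. snd e = v}. edge_load \<phi> e) = (\<Sum>e\<in>{e\<in>E. fst e = v}. edge_load \<phi> e)"
proof -
  have "length (filter (\<lambda>e. snd e = v) (walk_edges p)) = length (filter (\<lambda>e. fst e = v) (walk_edges p))"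
    if "\<phi> p \<noteq> 0" for p
  proof -
    from that assms(2) have "p \<noteq> []" "hd p = s" "last p = t"
      by (auto simp: path_flow_def st_walks_def)
    with assms(4,5) have "count_list (tl p) v = count_list (butlast p) v"
      by (cases p rule: rev_cases) (auto simp: tl_append split: list.split)
    then show ?thesis
      by (simp flip: count_list_map add: map_fst_walk_edges map_snd_walk_edges)
  qed
  then show ?thesis
    by (simp add: sum_edge_load[OF assms(1-3)])
qed

lemma edge_flow_value_edge_load:
  assumes "finite E" "path_flow E' s t \<phi>" "E' \<subseteq> E" "s \<noteq> t" "\<forall>(u, v) \<in> E. v \<noteq> s"
  shows "edge_flow_value E s (edge_load \<phi>) = flow_value \<phi>"
proof -
  have "length (filter (\<lambda>e. fst e = s) (walk_edges p)) = 1" if "\<phi> p \<noteq> 0" for p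
  proof -
    from that assms(2,3) have p: "p \<noteq> []" "hd p = s" "last p = t" "set (walk_edges p) \<subseteq> E"
      unfolding path_flow_def st_walks_def by blast+
    with assms(5) have "s \<notin> set (tl p)"
      by (fastforce simp flip: map_snd_walk_edges)
    with p(1,2) have "count_list p s = 1"
      by (cases p) auto
    with p(1,3) assms(4) have "count_list (butlast p) s = 1"
      by (metis append_butlast_last_id count_list.simps count_list_append add_0_right)
    then show ?thesis
      by (simp flip: count_list_map add: map_fst_walk_edges)
  qed
  then show ?thesis
    by (simp add: edge_flow_value_def flow_value_def sum_edge_load[OF assms(1-3)])
qed

lemma edge_flow_edge_load:
  assumes "finite E" "path_flow E' s t \<phi>" "E' \<subseteq> E" "\<forall>e\<in>E. edge_load \<phi> e \<le> c e"
  shows "edge_flow V E s t c (edge_load \<phi>)"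
  using assms edge_load_nonneg[OF assms(2)] edge_load_conservation[OF assms(1-3)]
  unfolding edge_flow_def by auto

lemma edge_flow_scale:
  assumes "edge_flow V E s t c f" "0 \<le> k" "\<forall>e\<in>E. k * f e \<le> c' e"
  shows "edge_flow V E s t c' (\<lambda>e. k * f e)"
  using assms unfolding edge_flow_def by (simp flip: sum_distrib_left)

lemma edge_flow_value_scale: "edge_flow_value E s (\<lambda>e. k * f e) = k * edge_flow_value E s f"
  by (simp add: edge_flow_value_def sum_distrib_left)

lemma path_latency_append:
  "xs \<noteq> [] \<Longrightarrow> path_latency l \<phi> (xs @ ys) = path_latency l \<phi> xs + path_latency l \<phi> (last xs # ys)"
  by (simp add: path_latency_def walk_edges_append)

lemma path_latency_nonneg:
  assumes "latency_fun E l" "path_flow E' s t \<phi>" "set (walk_edges p) \<subseteq> E"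
  shows "0 \<le> path_latency l \<phi> p"
  unfolding path_latency_def
proof (rule sum_list_nonneg)
  fix x assume "x \<in> set (map (\<lambda>e. l e (edge_load \<phi> e)) (walk_edges p))"
  with assms edge_load_nonneg[OF assms(2)] show "0 \<le> x"
    unfolding latency_fun_def by auto
qed

lemma wardrop_used_walk: "wardrop_flow E s t r l \<phi> \<Longrightarrow> 0 < \<phi> p \<Longrightarrow> p \<in> st_walks E s t"
  unfolding wardrop_flow_def path_flow_def by auto

lemma wardrop_flow_path_flow: "wardrop_flow E s t r l \<phi> \<Longrightarrow> path_flow E s t \<phi>"
  by (simp add: wardrop_flow_def)

lemma wardrop_latency_attained:
  assumes "wardrop_flow E s t r l \<phi>" "r \<noteq> 0"
  obtains q where "0 < \<phi> q" "wardrop_latency l \<phi> = path_latency l \<phi> q"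
proof -
  from assms have "\<exists>q. 0 < \<phi> q"
    unfolding wardrop_flow_def path_flow_def flow_value_def
    by (metis (mono_tags) less_eq_real_def mem_Collect_eq sum.neutral)
  then have "0 < \<phi> (SOME q. 0 < \<phi> q)"
    by (rule someI_ex)
  with assms that show ?thesis
    unfolding wardrop_latency_def wardrop_flow_def by auto
qed

lemma wardrop_latency_le_path_latency:
  assumes "wardrop_flow E s t r l \<phi>" "r \<noteq> 0" "p \<in> st_walks E s t"
  shows "wardrop_latency l \<phi> \<le> path_latency l \<phi> p"
proof -
  obtain q where "0 < \<phi> q" "wardrop_latency l \<phi> = path_latency l \<phi> q"
    using wardrop_latency_attained[OF assms(1,2)] .
  with assms show ?thesis
    unfolding wardrop_flow_def by (auto intro: wardrop_used_walk[OF assms(1)])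
qed

text \<open>Replacing the prefix q of a used walk by w gives another s-t walk, which cannot be faster.\<close>

lemma wardrop_used_prefix_shortest:
  assumes wardrop: "wardrop_flow E s t r l \<phi>" and used: "0 < \<phi> (q @ q')" and "q \<noteq> []"
    and walk: "w \<noteq> []" "hd w = s" "last w = last q" "set (walk_edges w) \<subseteq> E"
  shows "path_latency l \<phi> q \<le> path_latency l \<phi> w"
proof -
  have qq': "q @ q' \<in> st_walks E s t"
    using wardrop_used_walk[OF wardrop used] .
  have "w @ q' \<in> st_walks E s t"
  proof -
    from qq' walk have "last (w @ q') = t"
      by (cases "q' = []") (auto simp: st_walks_def)
    moreover from qq' walk walk_edges_append_subset(2)[OF \<open>q \<noteq> []\<close>, of q']
    have "set (walk_edges (w @ q')) \<subseteq> E"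
      by (auto simp: st_walks_def walk_edges_append)
    ultimately show ?thesis
      using walk by (simp add: st_walks_def)
  qed
  with wardrop used qq' have "path_latency l \<phi> (q @ q') \<le> path_latency l \<phi> (w @ q')"
    unfolding wardrop_flow_def by blast
  with \<open>q \<noteq> []\<close> walk show ?thesis
    by (simp add: path_latency_append)
qed

text \<open>Induction along p: its last edge lies on some used walk, whose prefix ending with that
  edge is shortest by the previous lemma.\<close>

lemma wardrop_used_edges_walk_latency:
  assumes wardrop: "wardrop_flow E s t r l \<phi>" and lat: "latency_fun E l"
  shows "p \<noteq> [] \<Longrightarrow> hd p = s \<Longrightarrow> \<forall>e\<in>set (walk_edges p). 0 < edge_load \<phi> e \<Longrightarrow>
    0 < \<phi> (q @ q') \<Longrightarrow> q \<noteq> [] \<Longrightarrow> last q = last p \<Longrightarrow>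
    path_latency l \<phi> p \<le> path_latency l \<phi> q"
proof (induction p arbitrary: q q' rule: rev_induct)
  case (snoc x xs)
  have flow: "path_flow E s t \<phi>"
    using wardrop_flow_path_flow[OF wardrop] .
  have q_walk: "hd q = s" "set (walk_edges q) \<subseteq> E"
    using wardrop_used_walk[OF wardrop snoc.prems(4)] walk_edges_append_subset(1)[OF snoc.prems(5)]
      snoc.prems(5) by (auto simp: st_walks_def)
  show ?case
  proof (cases "xs = []")
    case True
    then show ?thesis
      using path_latency_nonneg[OF lat flow q_walk(2)] by (simp add: path_latency_def)
  next
    case False
    define u where "u = last xs"
    have edges: "walk_edges (xs @ [x]) = walk_edges xs @ [(u, x)]"
      using walk_edges_append[OF False, of "[x]"] by (simp add: u_def)
    with snoc.prems(3) have "0 < edge_load \<phi> (u, x)"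
      by simp
    then obtain p' where "0 < \<phi> p'" and "(u, x) \<in> set (walk_edges p')"
      by (rule edge_load_pos_used_path[OF flow])
    then obtain a b where p': "p' = a @ u # x # b"
      using in_walk_edges_split by metis
    have "hd xs = s" "\<forall>e\<in>set (walk_edges xs). 0 < edge_load \<phi> e"
      using snoc.prems(2,3) False edges by auto
    moreover have "0 < \<phi> ((a @ [u]) @ x # b)"
      using \<open>0 < \<phi> p'\<close> p' by simp
    ultimately have "path_latency l \<phi> xs \<le> path_latency l \<phi> (a @ [u])"
      using snoc.IH[OF False, of "a @ [u]" "x # b"] by (simp add: u_def)
    moreover have "path_latency l \<phi> (a @ [u, x]) \<le> path_latency l \<phi> q"
    proof (rule wardrop_used_prefix_shortest[OF wardrop])
      show "0 < \<phi> ((a @ [u, x]) @ b)"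
        using \<open>0 < \<phi> p'\<close> p' by simp
    qed (use snoc.prems(5,6) q_walk in simp_all)
    moreover have "path_latency l \<phi> (xs @ [x]) = path_latency l \<phi> xs + path_latency l \<phi> [u, x]"
      using path_latency_append[OF False] by (simp add: u_def)
    moreover have "path_latency l \<phi> (a @ [u, x]) = path_latency l \<phi> (a @ [u]) + path_latency l \<phi> [u, x]"
      using path_latency_append[of "a @ [u]" l \<phi> "[x]"] by simp
    ultimately show ?thesis
      by linarith
  qed
qed simp

lemma wardrop_latency_le_of_dominated_walk:
  assumes wardrop_G: "wardrop_flow E s t r l \<phi>" and wardrop_H: "wardrop_flow H s t r l \<psi>"
    and lat: "latency_fun E l" and "H \<subseteq> E" "r \<noteq> 0" and p: "p \<in> st_walks E s t"
    and dominated: "\<forall>e\<in>set (walk_edges p). 0 < edge_load \<psi> e \<and> edge_load \<phi> e \<le> edge_load \<psi> e"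
  shows "wardrop_latency l \<phi> \<le> wardrop_latency l \<psi>"
proof -
  obtain q where q: "0 < \<psi> q" "wardrop_latency l \<psi> = path_latency l \<psi> q"
    using wardrop_latency_attained[OF wardrop_H \<open>r \<noteq> 0\<close>] .
  have "wardrop_latency l \<phi> \<le> path_latency l \<phi> p"
    by (rule wardrop_latency_le_path_latency[OF wardrop_G \<open>r \<noteq> 0\<close> p])
  also have "\<dots> \<le> path_latency l \<psi> p"
    unfolding path_latency_def
  proof (rule sum_list_mono)
    fix e assume e: "e \<in> set (walk_edges p)"
    with p lat have "mono_on {0..} (l e)"
      unfolding st_walks_def latency_fun_def by blast
    moreover have "0 \<le> edge_load \<phi> e" "edge_load \<phi> e \<le> edge_load \<psi> e"
      using e dominated edge_load_nonneg[OF wardrop_flow_path_flow[OF wardrop_G]] by auto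
    ultimately show "l e (edge_load \<phi> e) \<le> l e (edge_load \<psi> e)"
      by (auto elim!: mono_onD)
  qed
  also have "\<dots> \<le> path_latency l \<psi> q"
  proof -
    have "latency_fun H l"
      using lat \<open>H \<subseteq> E\<close> unfolding latency_fun_def by blast
    with p dominated q(1) show ?thesis
      using wardrop_used_edges_walk_latency[OF wardrop_H, of p q "[]"] wardrop_used_walk[OF wardrop_H q(1)]
      by (simp add: st_walks_def)
  qed
  finally show ?thesis
    using q(2) by simp
qed

lemma finite_uniform_gap:
  fixes f g :: "'a \<Rightarrow> real"
  assumes "finite S" "\<forall>x\<in>S. 0 \<le> f x"
  obtains \<epsilon> where "0 < \<epsilon>" "\<forall>x\<in>S. f x < g x \<longrightarrow> (1 + \<epsilon>) * f x \<le> g x"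
proof
  define \<epsilon> where "\<epsilon> = Min (insert 1 ((\<lambda>x. (g x - f x) / (f x + 1)) ` {x\<in>S. f x < g x}))"
  show "0 < \<epsilon>"
    using assms unfolding \<epsilon>_def by auto
  show "\<forall>x\<in>S. f x < g x \<longrightarrow> (1 + \<epsilon>) * f x \<le> g x"
  proof (intro ballI impI)
    fix x assume "x \<in> S" "f x < g x"
    with assms have "\<epsilon> \<le> (g x - f x) / (f x + 1)" "0 \<le> f x"
      unfolding \<epsilon>_def by (auto intro: Min_le)
    then have "\<epsilon> * (f x + 1) \<le> g x - f x"
      by (simp add: pos_le_divide_eq)
    moreover have "\<epsilon> * f x \<le> \<epsilon> * (f x + 1)"
      using \<open>0 < \<epsilon>\<close> by simp
    ultimately show "(1 + \<epsilon>) * f x \<le> g x"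
      by (simp add: algebra_simps)
  qed
qed

lemma saturating_max_capacity:
  assumes wardrop_G: "wardrop_flow E s t r l \<phi>" and wardrop_H: "wardrop_flow H s t r l \<psi>"
    and lat: "latency_fun E l" and "H \<subseteq> E" "r \<noteq> 0"
    and slower: "wardrop_latency l \<psi> < wardrop_latency l \<phi>"
    and "0 < \<epsilon>" and gap: "\<forall>e\<in>E. edge_load \<psi> e < edge_load \<phi> e \<longrightarrow>
      (1 + \<epsilon>) * edge_load \<psi> e \<le> edge_load \<phi> e"
  shows "saturating E s t (\<lambda>e. max (edge_load \<phi> e) ((1 + \<epsilon>) * edge_load \<psi> e)) (edge_load \<phi>)"
  unfolding saturating_def
proof (rule ballI, rule ccontr)
  fix p assume p: "p \<in> st_walks E s t"
    and "\<not> (\<exists>e\<in>set (walk_edges p). edge_load \<phi> e = max (edge_load \<phi> e) ((1 + \<epsilon>) * edge_load \<psi> e))"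
  then have "\<forall>e\<in>set (walk_edges p). edge_load \<phi> e < (1 + \<epsilon>) * edge_load \<psi> e"
    by (metis max.absorb1 not_le)
  moreover have "0 < edge_load \<psi> e \<and> edge_load \<phi> e \<le> edge_load \<psi> e"
    if "edge_load \<phi> e < (1 + \<epsilon>) * edge_load \<psi> e" "e \<in> E" for e
  proof
    have "0 < (1 + \<epsilon>) * edge_load \<psi> e"
      using that(1) edge_load_nonneg[OF wardrop_flow_path_flow[OF wardrop_G], of e] by linarith
    with \<open>0 < \<epsilon>\<close> show "0 < edge_load \<psi> e"
      by (simp add: zero_less_mult_iff)
    from gap that(2) have "edge_load \<psi> e < edge_load \<phi> e \<longrightarrow> (1 + \<epsilon>) * edge_load \<psi> e \<le> edge_load \<phi> e"
      by blast
    with that(1) show "edge_load \<phi> e \<le> edge_load \<psi> e"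
      by linarith
  qed
  ultimately have "\<forall>e\<in>set (walk_edges p). 0 < edge_load \<psi> e \<and> edge_load \<phi> e \<le> edge_load \<psi> e"
    using p by (auto simp: st_walks_def)
  then have "wardrop_latency l \<phi> \<le> wardrop_latency l \<psi>"
    by (rule wardrop_latency_le_of_dominated_walk[OF wardrop_G wardrop_H lat \<open>H \<subseteq> E\<close> \<open>r \<noteq> 0\<close> p])
  with slower show False
    by simp
qed

theorem theorem7:
  fixes V :: "'v set" and E :: "('v \<times> 'v) set" and s t :: 'v
  assumes "st_graph V E s t" and "vulnerable V E s t"
  shows "edge_weak V E s t"
proof -
  from assms(1) have "finite E" "s \<noteq> t" "\<forall>(u, v) \<in> E. v \<noteq> s"
    unfolding st_graph_def by (auto intro: finite_subset)
  obtain r l H \<phi> \<psi> where "0 \<le> r" and lat: "latency_fun E l" and "H \<subseteq> E"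
    and wardrop_G: "wardrop_flow E s t r l \<phi>" and wardrop_H: "wardrop_flow H s t r l \<psi>"
    and slower: "wardrop_latency l \<psi> < wardrop_latency l \<phi>"
    using assms(2) unfolding vulnerable_def by blast
  have rate: "flow_value \<phi> = r" "flow_value \<psi> = r"
    using wardrop_G wardrop_H by (simp_all add: wardrop_flow_def)
  with slower have "r \<noteq> 0"
    unfolding wardrop_latency_def by auto
  with \<open>0 \<le> r\<close> have "0 < r"
    by simp
  note flow_G = wardrop_flow_path_flow[OF wardrop_G] and flow_H = wardrop_flow_path_flow[OF wardrop_H]
  obtain \<epsilon> where "0 < \<epsilon>" and gap: "\<forall>e\<in>E. edge_load \<psi> e < edge_load \<phi> e \<longrightarrow>
      (1 + \<epsilon>) * edge_load \<psi> e \<le> edge_load \<phi> e"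
    using finite_uniform_gap[OF \<open>finite E\<close>] edge_load_nonneg[OF flow_H] by blast
  define c where "c e = max (edge_load \<phi> e) ((1 + \<epsilon>) * edge_load \<psi> e)" for e
  have "saturating E s t c (edge_load \<phi>)"
    unfolding c_def
    by (rule saturating_max_capacity[OF wardrop_G wardrop_H lat \<open>H \<subseteq> E\<close> \<open>r \<noteq> 0\<close> slower
          \<open>0 < \<epsilon>\<close> gap])
  moreover have "edge_flow V E s t c (edge_load \<phi>)"
    by (rule edge_flow_edge_load[OF \<open>finite E\<close> flow_G order_refl]) (simp add: c_def)
  moreover have "edge_flow V E s t c (\<lambda>e. (1 + \<epsilon>) * edge_load \<psi> e)"
  proof (rule edge_flow_scale)
    show "edge_flow V E s t (edge_load \<psi>) (edge_load \<psi>)"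
      by (rule edge_flow_edge_load[OF \<open>finite E\<close> flow_H \<open>H \<subseteq> E\<close>]) simp
  qed (use \<open>0 < \<epsilon>\<close> in \<open>simp_all add: c_def\<close>)
  moreover have "edge_flow_value E s (edge_load \<phi>) < edge_flow_value E s (\<lambda>e. (1 + \<epsilon>) * edge_load \<psi> e)"
    using edge_flow_value_edge_load[OF \<open>finite E\<close> flow_G order_refl] rate
      edge_flow_value_edge_load[OF \<open>finite E\<close> flow_H \<open>H \<subseteq> E\<close>] \<open>s \<noteq> t\<close> \<open>\<forall>(u, v) \<in> E. v \<noteq> s\<close>
      \<open>0 < r\<close> \<open>0 < \<epsilon>\<close> by (simp add: edge_flow_value_scale)
  moreover have "\<forall>e\<in>E. 0 \<le> c e"
    using edge_load_nonneg[OF flow_G] by (simp add: c_def max.coboundedI1)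
  ultimately show ?thesis
    unfolding edge_weak_def by blast
qed

end
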